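(* Let $\Omega\subset\mathbb{R}^N$ be a bounded domain with smooth boundary, $0<s<1$, $M$ a Young function satisfying $1<m_0:=\inf_{t>0}\frac{tm(t)}{M(t)}\le m^0:=\sup_{t>0}\frac{tm(t)}{M(t)}<\infty$, (S) $t\mapsto M(\sqrt t)$ convex on $[0,\infty)$, and (Q) $\lim_{t\to+\infty}|t|^q/M(t)=0$, where $1<q<\min(p^*,m_0)$, $p^*=Np/(N-p)$ for a fixed $1<p<N$. Let $g:\Omega\times\mathbb{R}\to\mathbb{R}$ be Carathéodory with $G(x,t)=\int_0^t g(x,\tau)d\tau$ satisfying (A) $|g(x,t)|\le C_0|t|^{q-1}$ and (B) $C_1|t|^q\le G(x,t)\le C_2|t|^q$ for all $x\in\Omega,t\in\mathbb{R}$, with $C_0,C_1,C_2>0$. Then for each $\lambda>0$ the functional $$I_\lambda(u)=\int_{\mathbb{R}^N}\int_{\mathbb{R}^N}M\Big(\frac{u(x)-u(y)}{|x-y|^s}\Big)\frac{dx\,dy}{|x-y|^N}-\lambda\int_\Omega G(x,u)\,dx$$ is coercive on $\tilde W^{s,M}_0(\Omega)$, i.e. $I_\lambda(u)\to\infty$ as $\|u\|\to\infty$.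
   Context: A Young function is $M(t)=\int_0^{|t|}m(\tau)\,d\tau$, where $m:\mathbb{R}\to\mathbb{R}$ is an increasing homeomorphism of $\mathbb{R}$ onto $\mathbb{R}$ with $m(0)=0$, $m(t)>0$ for $t>0$, $m(t)\to\infty$ as $t\to\infty$. $L^M$ is the Orlicz space with Luxemburg norm $\|u\|_{(M)}=\inf\{\lambda>0:\int M(u/\lambda)\le1\}$. $W^{s,M}(\mathbb{R}^N)$ is the set of $u\in L^M(\mathbb{R}^N)$ with $\int\int M\big(\frac{u(x)-u(y)}{|x-y|^s}\big)\frac{dxdy}{|x-y|^N}<\infty$, with seminorm $[u]_{(s,M)}=\inf\{\lambda>0:\int\int M\big(\frac{u(x)-u(y)}{\lambda|x-y|^s}\big)\frac{dxdy}{|x-y|^N}\le1\}$ and norm $\|u\|_{(s,M)}=\|u\|_{(M)}+[u]_{(s,M)}$. $\tilde W^{s,M}_0(\Omega)$ is the space of functions in the closure $W^{s,M}_0(\Omega)$ of $C_c^\infty(\Omega)$ in $\|\cdot\|_{(s,M)}$ which vanish a.e. in $\mathbb{R}^N\setminus\Omega$, normed by $\|u\|=[u]_{(s,M)}$. *)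

theory Defs
  imports "HOL-Analysis.Analysis"
begin

definition young_gen :: "(real \<Rightarrow> real) \<Rightarrow> bool" where
  "young_gen m \<longleftrightarrow> strict_mono m \<and> continuous_on UNIV m \<and> surj m \<and> m 0 = 0
      \<and> (\<forall>t>0. m t > 0) \<and> filterlim m at_top at_top"

definition youngM :: "(real \<Rightarrow> real) \<Rightarrow> real \<Rightarrow> real" where
  "youngM m t = integral {0..\<bar>t\<bar>} m"

fun Ck_on :: "nat \<Rightarrow> ('a::euclidean_space \<Rightarrow> real) \<Rightarrow> 'a set \<Rightarrow> bool" where
  "Ck_on 0 f S = continuous_on S f"
| "Ck_on (Suc k) f S = ((\<forall>x\<in>S. f differentiable (at x)) \<and>
      (\<forall>i\<in>Basis. Ck_on k (\<lambda>x. frechet_derivative f (at x) i) S))"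

definition smooth_on :: "('a::euclidean_space \<Rightarrow> real) \<Rightarrow> 'a set \<Rightarrow> bool" where
  "smooth_on f S \<longleftrightarrow> (\<forall>k. Ck_on k f S)"

definition smooth_bounded_domain :: "'a::euclidean_space set \<Rightarrow> bool" where
  "smooth_bounded_domain \<Omega> \<longleftrightarrow> open \<Omega> \<and> connected \<Omega> \<and> \<Omega> \<noteq> {} \<and> bounded \<Omega> \<and>
     (\<forall>z\<in>frontier \<Omega>. \<exists>r>0. \<exists>\<psi>. smooth_on \<psi> (ball z r) \<and> \<psi> z = 0 \<and>
         frechet_derivative \<psi> (at z) \<noteq> (\<lambda>_. 0) \<and>
         \<Omega> \<inter> ball z r = {x\<in>ball z r. \<psi> x < 0})"

definition Cc_inf :: "'a::euclidean_space set \<Rightarrow> ('a \<Rightarrow> real) set" where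
  "Cc_inf \<Omega> = {\<phi>. smooth_on \<phi> UNIV \<and> compact (closure {x. \<phi> x \<noteq> 0})
                     \<and> closure {x. \<phi> x \<noteq> 0} \<subseteq> \<Omega>}"

definition modM :: "(real \<Rightarrow> real) \<Rightarrow> ('a::euclidean_space \<Rightarrow> real) \<Rightarrow> ennreal" where
  "modM M u = (\<integral>\<^sup>+ x. ennreal (M (u x)) \<partial>lebesgue)"

definition fmodM :: "real \<Rightarrow> (real \<Rightarrow> real) \<Rightarrow> ('a::euclidean_space \<Rightarrow> real) \<Rightarrow> ennreal" where
  "fmodM s M u = (\<integral>\<^sup>+ x. \<integral>\<^sup>+ y.
      ennreal (M ((u x - u y) / (dist x y powr s)) / (dist x y powr real DIM('a))) \<partial>lebesgue \<partial>lebesgue)"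

definition orlicz_space :: "(real \<Rightarrow> real) \<Rightarrow> ('a::euclidean_space \<Rightarrow> real) set" where
  "orlicz_space M = {u. u \<in> borel_measurable lebesgue \<and> (\<exists>l>0. modM M (\<lambda>x. u x / l) < \<infinity>)}"

definition lux_norm :: "(real \<Rightarrow> real) \<Rightarrow> ('a::euclidean_space \<Rightarrow> real) \<Rightarrow> real" where
  "lux_norm M u = Inf {l. l > 0 \<and> modM M (\<lambda>x. u x / l) \<le> 1}"

definition frac_seminorm :: "real \<Rightarrow> (real \<Rightarrow> real) \<Rightarrow> ('a::euclidean_space \<Rightarrow> real) \<Rightarrow> real" where
  "frac_seminorm s M u = Inf {l. l > 0 \<and> fmodM s M (\<lambda>x. u x / l) \<le> 1}"

definition frac_norm :: "real \<Rightarrow> (real \<Rightarrow> real) \<Rightarrow> ('a::euclidean_space \<Rightarrow> real) \<Rightarrow> real" where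
  "frac_norm s M u = lux_norm M u + frac_seminorm s M u"

definition Wspace :: "real \<Rightarrow> (real \<Rightarrow> real) \<Rightarrow> ('a::euclidean_space \<Rightarrow> real) set" where
  "Wspace s M = {u. u \<in> orlicz_space M \<and> fmodM s M u < \<infinity>}"

definition W0space :: "real \<Rightarrow> (real \<Rightarrow> real) \<Rightarrow> 'a::euclidean_space set \<Rightarrow> ('a \<Rightarrow> real) set" where
  "W0space s M \<Omega> = {u. u \<in> Wspace s M \<and>
      (\<forall>e>0. \<exists>\<phi>\<in>Cc_inf \<Omega>. frac_norm s M (\<lambda>x. u x - \<phi> x) < e)}"

definition W0tilde :: "real \<Rightarrow> (real \<Rightarrow> real) \<Rightarrow> 'a::euclidean_space set \<Rightarrow> ('a \<Rightarrow> real) set" where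
  "W0tilde s M \<Omega> = {u. u \<in> W0space s M \<Omega> \<and> (AE x in lebesgue. x \<notin> \<Omega> \<longrightarrow> u x = 0)}"

definition primitive :: "('a \<Rightarrow> real \<Rightarrow> real) \<Rightarrow> 'a \<Rightarrow> real \<Rightarrow> real" where
  "primitive g x t = (if 0 \<le> t then integral {0..t} (g x) else - integral {t..0} (g x))"

definition I_functional :: "real \<Rightarrow> (real \<Rightarrow> real) \<Rightarrow> 'a::euclidean_space set \<Rightarrow>
     ('a \<Rightarrow> real \<Rightarrow> real) \<Rightarrow> real \<Rightarrow> ('a \<Rightarrow> real) \<Rightarrow> real" where
  "I_functional s M \<Omega> g lam u =
     enn2real (fmodM s M u) - lam * (LINT x:\<Omega>|lebesgue. primitive g x (u x))"

end

theory Submission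
  imports Defs
begin

text \<open>Since \<open>u\<close> vanishes outside \<open>\<Omega> \<subseteq> B(0, r)\<close>, comparing each \<open>x \<in> \<Omega>\<close> with the points of a
  ball \<open>B(z, r)\<close>, \<open>|z| = 10 r\<close>, where \<open>u = 0\<close>, shows that the fractional modular
  \<open>\<Phi>(u) = \<integral>\<integral> M((u x - u y)/|x - y|\<^sup>s) |x - y|\<^sup>-\<^sup>N\<close> dominates \<open>c \<integral>\<^sub>\<Omega> M(u/K)\<close>; here (S) makes
  \<open>M\<close> monotone in \<open>|t|\<close>. By (Q), \<open>|t|\<^sup>q \<le> C\<^sub>\<epsilon> + \<epsilon> M(t/K)\<close>, so by the upper bound in (B) the potential
  term satisfies \<open>\<lambda> \<integral>\<^sub>\<Omega> G(x, u) \<le> C + \<Phi>(u)/2\<close>, whence \<open>I\<^sub>\<lambda>(u) \<ge> \<Phi>(u)/2 - C\<close>. Finally (S) also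
  gives \<open>M(t/L) \<le> M(t)/L\<close> for \<open>L \<ge> 1\<close>, so the Luxemburg seminorm is at most \<open>max \<Phi>(u) 1\<close>.\<close>

lemma young_gen_nonneg: "young_gen m \<Longrightarrow> 0 \<le> t \<Longrightarrow> 0 \<le> m t"
  using strict_mono_less_eq[of m 0 t] by (simp add: young_gen_def)

lemma young_gen_integrable_on:
  assumes "young_gen m"
  shows "m integrable_on {a..b}"
proof (rule integrable_continuous_real)
  show "continuous_on {a..b} m"
    using assms continuous_on_subset[of UNIV m] by (simp add: young_gen_def)
qed

lemma youngM_0 [simp]: "youngM m 0 = 0"
  by (simp add: youngM_def)

lemma youngM_abs [simp]: "youngM m \<bar>t\<bar> = youngM m t"
  by (simp add: youngM_def)

lemma youngM_nonneg:
  assumes young: "young_gen m"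
  shows "0 \<le> youngM m t"
  unfolding youngM_def
  by (rule integral_nonneg[OF young_gen_integrable_on[OF young]]) (simp add: young_gen_nonneg[OF young])

lemma youngM_pos:
  assumes young: "young_gen m" and "t \<noteq> 0"
  shows "0 < youngM m t"
proof -
  define T where "T = \<bar>t\<bar>"
  have T: "0 < T" using assms by (simp add: T_def)
  have "0 < T/2 * m (T/2)"
    using young T by (simp add: young_gen_def)
  also have "\<dots> = integral {T/2..T} (\<lambda>_. m (T/2))"
    using T by simp
  also have "\<dots> \<le> integral {T/2..T} m"
    by (rule integral_le[OF _ young_gen_integrable_on[OF young]])
      (use young strict_mono_less_eq[of m "T/2"] in \<open>auto simp: young_gen_def\<close>)
  also have "\<dots> \<le> integral {0..T/2} m + integral {T/2..T} m"
    using integral_nonneg[OF young_gen_integrable_on[OF young], of 0 "T/2"]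
    by (simp add: young_gen_nonneg[OF young])
  also have "\<dots> = youngM m t"
    using T unfolding youngM_def T_def[symmetric]
    by (intro Henstock_Kurzweil_Integration.integral_combine young_gen_integrable_on[OF young]) auto
  finally show ?thesis .
qed

text \<open>Convexity of \<open>M \<circ> sqrt\<close> between \<open>0\<close> and \<open>t\<^sup>2\<close> even gives \<open>M (a t) \<le> a\<^sup>2 M t\<close>.\<close>

lemma youngM_mult_le:
  assumes young: "young_gen m" and S: "convex_on {0..} (\<lambda>t. youngM m (sqrt t))"
    and a: "0 \<le> a" "a \<le> 1"
  shows "youngM m (a * t) \<le> a * youngM m t"
proof -
  have "youngM m (sqrt ((1 - a\<^sup>2) * 0 + a\<^sup>2 * t\<^sup>2))
      \<le> (1 - a\<^sup>2) * youngM m (sqrt 0) + a\<^sup>2 * youngM m (sqrt (t\<^sup>2))"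
    using convex_onD[OF S, of "a\<^sup>2" 0 "t\<^sup>2"] a by (simp add: power_le_one)
  moreover have "youngM m (a * t) = youngM m (a * \<bar>t\<bar>)"
    using youngM_abs[of m "a * t"] a by (simp add: abs_mult)
  ultimately have "youngM m (a * t) \<le> a\<^sup>2 * youngM m t"
    using a by (simp add: real_sqrt_mult abs_mult)
  also have "\<dots> \<le> a * youngM m t"
    using a youngM_nonneg[OF young, of t]
    by (simp add: power2_eq_square mult_left_le_one_le mult.assoc)
  finally show ?thesis .
qed

lemma youngM_mono_abs:
  assumes young: "young_gen m" and S: "convex_on {0..} (\<lambda>t. youngM m (sqrt t))"
    and ab: "\<bar>a\<bar> \<le> \<bar>b\<bar>"
  shows "youngM m a \<le> youngM m b"
proof (cases "b = 0")
  case True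
  then show ?thesis using ab by simp
next
  case False
  have "youngM m a = youngM m ((\<bar>a\<bar> / \<bar>b\<bar>) * \<bar>b\<bar>)"
    using False by simp
  also have "\<dots> \<le> (\<bar>a\<bar> / \<bar>b\<bar>) * youngM m b"
    using youngM_mult_le[OF young S, of "\<bar>a\<bar> / \<bar>b\<bar>" "\<bar>b\<bar>"] ab False by simp
  also have "\<dots> \<le> youngM m b"
    by (intro mult_left_le_one_le youngM_nonneg[OF young]) (use ab False in auto)
  finally show ?thesis .
qed

lemma borel_measurable_youngM:
  assumes young: "young_gen m" and S: "convex_on {0..} (\<lambda>t. youngM m (sqrt t))"
    and f: "f \<in> borel_measurable N"
  shows "(\<lambda>x. youngM m (f x)) \<in> borel_measurable N"
proof -
  have "mono (\<lambda>t. youngM m (max t 0))"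
    by (intro monoI youngM_mono_abs[OF young S]) auto
  then have "(\<lambda>x. youngM m (max \<bar>f x\<bar> 0)) \<in> borel_measurable N"
    using measurable_compose[OF borel_measurable_abs[OF f] borel_measurable_mono] by blast
  then show ?thesis by simp
qed

lemma youngM_kernel_antimono:
  assumes young: "young_gen m" and S: "convex_on {0..} (\<lambda>t. youngM m (sqrt t))"
    and d: "0 < d" "d \<le> D" and "0 \<le> s" "0 \<le> n"
  shows "youngM m (a / D powr s) / D powr n \<le> youngM m (a / d powr s) / d powr n"
proof (rule frac_le)
  have "d powr s \<le> D powr s"
    using assms by (intro powr_mono2) auto
  then have "\<bar>a\<bar> / D powr s \<le> \<bar>a\<bar> / d powr s"
    using d by (intro divide_left_mono) auto
  then have "\<bar>a / D powr s\<bar> \<le> \<bar>a / d powr s\<bar>"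
    by (simp add: abs_div)
  then show "youngM m (a / D powr s) \<le> youngM m (a / d powr s)"
    by (rule youngM_mono_abs[OF young S])
  show "d powr n \<le> D powr n"
    using assms by (intro powr_mono2) auto
qed (use d youngM_nonneg[OF young] in auto)

lemma powr_le_const_plus_youngM:
  assumes young: "young_gen m"
    and Q: "((\<lambda>t. \<bar>t\<bar> powr q / youngM m t) \<longlongrightarrow> 0) at_top"
    and q: "0 \<le> q" and e: "0 < e"
  obtains C where "\<And>t. \<bar>t\<bar> powr q \<le> C + e * youngM m t"
proof -
  obtain T where T: "\<And>t. T \<le> t \<Longrightarrow> \<bar>t\<bar> powr q / youngM m t < e"
    using order_tendstoD(2)[OF Q e] by (auto simp: eventually_at_top_linorder)
  have "\<bar>t\<bar> powr q \<le> \<bar>T\<bar> powr q + e * youngM m t" for t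
  proof (cases "\<bar>T\<bar> \<le> \<bar>t\<bar> \<and> t \<noteq> 0")
    case True
    have "T \<le> \<bar>t\<bar>"
      using True by linarith
    then have "\<bar>t\<bar> powr q / youngM m t < e"
      using T[of "\<bar>t\<bar>"] by simp
    then have "\<bar>t\<bar> powr q < e * youngM m t"
      using youngM_pos[OF young, of t] True by (simp add: divide_less_eq)
    then show ?thesis
      using powr_ge_zero[of "\<bar>T\<bar>" q] by linarith
  next
    case False
    then have "\<bar>t\<bar> \<le> \<bar>T\<bar>"
      by auto
    then have "\<bar>t\<bar> powr q \<le> \<bar>T\<bar> powr q"
      by (rule powr_mono2[OF q abs_ge_zero])
    then show ?thesis
      using e youngM_nonneg[OF young, of t] by (simp add: add_increasing2)
  qed
  then show ?thesis by (rule that)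
qed

text \<open>Unlike \<open>nn_integral_cmult\<close>, this needs no measurability of \<open>f\<close>: the double integral in
  \<open>fmodM\<close> is taken of a possibly non-measurable integrand.\<close>

lemma nn_integral_cmult_le:
  fixes r :: real
  assumes "0 \<le> r"
  shows "(\<integral>\<^sup>+ x. ennreal r * f x \<partial>N) \<le> ennreal r * integral\<^sup>N N f"
proof (cases "r = 0")
  case True
  then show ?thesis by simp
next
  case False
  then have r: "r > 0" using assms by simp
  show ?thesis
    unfolding nn_integral_def
  proof (rule SUP_least)
    fix g assume g: "g \<in> {g. simple_function N g \<and> g \<le> (\<lambda>x. ennreal r * f x)}"
    define g' where "g' x = g x / ennreal r" for x
    have sg': "simple_function N g'"
      using g unfolding g'_def by (auto intro: simple_function_compose1)
    have g_eq: "g x = ennreal r * g' x" for x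
    proof -
      have "ennreal r * (g x / ennreal r) = (g x * ennreal r) / ennreal r"
        by (simp add: ennreal_times_divide mult.commute)
      also have "\<dots> = g x"
        using r by (intro mult_divide_eq_ennreal) auto
      finally show ?thesis unfolding g'_def by simp
    qed
    have "g' \<le> f"
    proof (rule le_funI)
      fix x
      have "g x \<le> ennreal r * f x"
        using g by (auto simp: le_fun_def)
      then have "ennreal r * g' x \<le> ennreal r * f x"
        by (simp only: g_eq)
      then show "g' x \<le> f x"
        using r ennreal_mult_le_mult_iff[of "ennreal r" "g' x" "f x"] by simp
    qed
    have "integral\<^sup>S N g = ennreal r * integral\<^sup>S N g'"
      using sg' by (simp add: g_eq[abs_def])
    also have "\<dots> \<le> ennreal r * (SUP g\<in>{g. simple_function N g \<and> g \<le> f}. integral\<^sup>S N g)"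
      using sg' \<open>g' \<le> f\<close> by (intro mult_left_mono SUP_upper) auto
    finally show "integral\<^sup>S N g \<le> ennreal r * (SUP g\<in>{g. simple_function N g \<and> g \<le> f}. integral\<^sup>S N g)" .
  qed
qed

lemma fmodM_divide_le:
  fixes u :: "'a::euclidean_space \<Rightarrow> real"
  assumes young: "young_gen m" and S: "convex_on {0..} (\<lambda>t. youngM m (sqrt t))" and L: "1 \<le> L"
  shows "fmodM s (youngM m) (\<lambda>x. u x / L) \<le> ennreal (1 / L) * fmodM s (youngM m) u"
proof -
  let ?k = "\<lambda>v x y. ennreal (youngM m ((v x - v y) / dist x y powr s) / dist x y powr real DIM('a))"
  have pointwise: "?k (\<lambda>x. u x / L) x y \<le> ennreal (1 / L) * ?k u x y" for x y
  proof -
    have scale: "(u x / L - u y / L) / dist x y powr s = (1 / L) * ((u x - u y) / dist x y powr s)"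
      by (simp add: diff_divide_distrib ac_simps)
    have "youngM m ((u x / L - u y / L) / dist x y powr s)
        \<le> (1 / L) * youngM m ((u x - u y) / dist x y powr s)"
      unfolding scale by (rule youngM_mult_le[OF young S]) (use L in auto)
    then have "youngM m ((u x / L - u y / L) / dist x y powr s) / dist x y powr real DIM('a)
        \<le> (1 / L) * youngM m ((u x - u y) / dist x y powr s) / dist x y powr real DIM('a)"
      by (rule divide_right_mono) simp
    then show ?thesis
      using L youngM_nonneg[OF young] by (simp add: ennreal_mult[symmetric] ennreal_leI)
  qed
  have "fmodM s (youngM m) (\<lambda>x. u x / L)
      \<le> (\<integral>\<^sup>+ x. \<integral>\<^sup>+ y. ennreal (1 / L) * ?k u x y \<partial>lebesgue \<partial>lebesgue)"
    unfolding fmodM_def by (intro nn_integral_mono pointwise)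
  also have "\<dots> \<le> (\<integral>\<^sup>+ x. ennreal (1 / L) * (\<integral>\<^sup>+ y. ?k u x y \<partial>lebesgue) \<partial>lebesgue)"
    using L by (intro nn_integral_mono nn_integral_cmult_le) simp
  also have "\<dots> \<le> ennreal (1 / L) * fmodM s (youngM m) u"
    unfolding fmodM_def using L by (intro nn_integral_cmult_le) simp
  finally show ?thesis .
qed

lemma frac_seminorm_le_max_fmodM:
  fixes u :: "'a::euclidean_space \<Rightarrow> real"
  assumes young: "young_gen m" and S: "convex_on {0..} (\<lambda>t. youngM m (sqrt t))"
    and fin: "fmodM s (youngM m) u < \<infinity>"
  shows "frac_seminorm s (youngM m) u \<le> max (enn2real (fmodM s (youngM m) u)) 1"
proof -
  define L where "L = max (enn2real (fmodM s (youngM m) u)) 1"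
  have L: "1 \<le> L"
    by (simp add: L_def)
  have "fmodM s (youngM m) u = ennreal (enn2real (fmodM s (youngM m) u))"
    using fin by (simp add: less_top[symmetric] ennreal_enn2real)
  also have "\<dots> \<le> ennreal L"
    by (rule ennreal_leI) (simp add: L_def)
  finally have u: "fmodM s (youngM m) u \<le> ennreal L" .
  have "fmodM s (youngM m) (\<lambda>x. u x / L) \<le> ennreal (1 / L) * fmodM s (youngM m) u"
    by (rule fmodM_divide_le[OF young S L])
  also have "\<dots> \<le> ennreal (1 / L) * ennreal L"
    using u by (intro mult_left_mono) auto
  also have "\<dots> = 1"
    using L by (simp add: ennreal_mult[symmetric])
  finally have "frac_seminorm s (youngM m) u \<le> L"
    unfolding frac_seminorm_def using L by (intro cInf_lower) (auto intro: bdd_belowI[of _ 0])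
  then show ?thesis
    by (simp add: L_def)
qed

lemma modular_le_fmodM:
  fixes \<Omega> :: "'a::euclidean_space set" and u :: "'a \<Rightarrow> real" and z :: 'a
  assumes young: "young_gen m" and S: "convex_on {0..} (\<lambda>t. youngM m (sqrt t))" and s: "0 \<le> s"
    and r: "0 < r" "\<Omega> \<subseteq> ball 0 r" and z: "norm z = 10 * r"
    and u: "AE y in lebesgue. y \<notin> \<Omega> \<longrightarrow> u y = 0"
  shows "(\<integral>\<^sup>+ x \<in> \<Omega>. ennreal (measure lebesgue (ball z r) / (12 * r) powr real DIM('a)
            * youngM m (u x / (12 * r) powr s)) \<partial>lebesgue)
         \<le> fmodM s (youngM m) u"
  unfolding fmodM_def
proof (rule nn_integral_mono)
  fix x
  define c where "c = youngM m (u x / (12 * r) powr s) / (12 * r) powr real DIM('a)"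
  have c: "0 \<le> c"
    unfolding c_def using youngM_nonneg[OF young] by simp
  show "ennreal (measure lebesgue (ball z r) / (12 * r) powr real DIM('a)
            * youngM m (u x / (12 * r) powr s)) * indicator \<Omega> x
        \<le> (\<integral>\<^sup>+ y. ennreal (youngM m ((u x - u y) / dist x y powr s) / dist x y powr real DIM('a)) \<partial>lebesgue)"
  proof (cases "x \<in> \<Omega>")
    case False
    then show ?thesis by simp
  next
    case True
    then have x: "norm x < r" using r by auto
    have far: "0 < dist x y \<and> dist x y \<le> 12 * r \<and> y \<notin> \<Omega>" if "y \<in> ball z r" for y
    proof -
      have "norm z \<le> norm y + dist z y" "norm y \<le> norm x + dist x y" "dist x y \<le> norm x + norm y"
        "norm y \<le> norm z + dist z y"
        by (metis dist_norm norm_minus_commute norm_triangle_sub add.commute norm_triangle_ineq4)+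
      then have "r < norm y" "0 < dist x y" "dist x y \<le> 12 * r"
        using that x z by (auto simp: dist_commute)
      then show ?thesis using r by auto
    qed
    have "ennreal (measure lebesgue (ball z r) / (12 * r) powr real DIM('a)
            * youngM m (u x / (12 * r) powr s)) * indicator \<Omega> x
        = ennreal (c * measure lebesgue (ball z r))"
      using True by (simp add: c_def mult_ac)
    also have "\<dots> = (\<integral>\<^sup>+ y. ennreal c * indicator (ball z r) y \<partial>lebesgue)"
      using c by (simp add: nn_integral_cmult_indicator emeasure_eq_measure2 ennreal_mult)
    also have "\<dots> \<le> (\<integral>\<^sup>+ y. ennreal (youngM m ((u x - u y) / dist x y powr s) / dist x y powr real DIM('a)) \<partial>lebesgue)"
    proof (rule nn_integral_mono_AE)
      show "AE y in lebesgue. ennreal c * indicator (ball z r) y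
          \<le> ennreal (youngM m ((u x - u y) / dist x y powr s) / dist x y powr real DIM('a))"
        using u
      proof eventually_elim
        case (elim y)
        show ?case
        proof (cases "y \<in> ball z r")
          case True
          then have "u y = 0" "0 < dist x y" "dist x y \<le> 12 * r"
            using far elim by auto
          then have "c \<le> youngM m ((u x - u y) / dist x y powr s) / dist x y powr real DIM('a)"
            unfolding c_def using youngM_kernel_antimono[OF young S, of "dist x y" "12 * r"] s by simp
          then show ?thesis using True by (simp add: ennreal_leI)
        qed simp
      qed
    qed
    finally show ?thesis .
  qed
qed

lemma set_integral_le_affine_bound:
  fixes h f :: "'b \<Rightarrow> real"
  assumes \<Omega>: "\<Omega> \<in> fmeasurable M" and f: "f \<in> borel_measurable M" "\<And>x. 0 \<le> f x"
    and \<alpha>: "0 \<le> \<alpha>" and \<beta>: "0 \<le> \<beta>"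
    and B: "0 \<le> B" "(\<integral>\<^sup>+ x \<in> \<Omega>. ennreal (f x) \<partial>M) \<le> ennreal B"
    and h: "\<And>x. x \<in> \<Omega> \<Longrightarrow> h x \<le> \<alpha> + \<beta> * f x"
  shows "(LINT x:\<Omega>|M. h x) \<le> \<alpha> * measure M \<Omega> + \<beta> * B"
  unfolding set_lebesgue_integral_def
proof (rule integral_real_bounded)
  have "(\<integral>\<^sup>+ x. ennreal (indicator \<Omega> x *\<^sub>R h x) \<partial>M)
      \<le> (\<integral>\<^sup>+ x. ennreal \<alpha> * indicator \<Omega> x + ennreal \<beta> * (ennreal (f x) * indicator \<Omega> x) \<partial>M)"
  proof (rule nn_integral_mono)
    fix x
    show "ennreal (indicator \<Omega> x *\<^sub>R h x)
        \<le> ennreal \<alpha> * indicator \<Omega> x + ennreal \<beta> * (ennreal (f x) * indicator \<Omega> x)"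
    proof (cases "x \<in> \<Omega>")
      case True
      then have "ennreal (h x) \<le> ennreal (\<alpha> + \<beta> * f x)"
        using h by (intro ennreal_leI) auto
      then show ?thesis
        using True \<alpha> \<beta> f(2)[of x] by (simp add: ennreal_plus ennreal_mult)
    qed simp
  qed
  also have "\<dots> = ennreal \<alpha> * emeasure M \<Omega> + ennreal \<beta> * (\<integral>\<^sup>+ x \<in> \<Omega>. ennreal (f x) \<partial>M)"
    using \<Omega> f(1) by (simp add: nn_integral_add nn_integral_cmult_indicator nn_integral_cmult)
  also have "\<dots> \<le> ennreal (\<alpha> * measure M \<Omega>) + ennreal \<beta> * ennreal B"
    using \<Omega> \<alpha> B(2) by (intro add_mono mult_left_mono) (simp_all add: emeasure_eq_measure2 ennreal_mult)
  also have "\<dots> = ennreal (\<alpha> * measure M \<Omega> + \<beta> * B)"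
    using \<alpha> \<beta> B(1) by (simp add: ennreal_plus ennreal_mult)
  finally show "integral\<^sup>N M (\<lambda>x. indicator \<Omega> x *\<^sub>R h x) \<le> ennreal (\<alpha> * measure M \<Omega> + \<beta> * B)" .
qed (use \<alpha> \<beta> B(1) in simp)

lemma set_integral_le_const_plus_fmodM:
  fixes \<Omega> :: "'a::euclidean_space set" and G :: "'a \<Rightarrow> real \<Rightarrow> real"
  assumes young: "young_gen m" and S: "convex_on {0..} (\<lambda>t. youngM m (sqrt t))"
    and Q: "((\<lambda>t. \<bar>t\<bar> powr q / youngM m t) \<longlongrightarrow> 0) at_top" and q: "0 \<le> q" and s: "0 \<le> s"
    and \<Omega>: "bounded \<Omega>" "\<Omega> \<in> sets lebesgue"
    and G: "\<And>x t. x \<in> \<Omega> \<Longrightarrow> G x t \<le> C2 * \<bar>t\<bar> powr q" and C2: "0 < C2"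
    and e: "0 < e"
  obtains C where "\<And>u. u \<in> borel_measurable lebesgue \<Longrightarrow> (AE x in lebesgue. x \<notin> \<Omega> \<longrightarrow> u x = 0)
      \<Longrightarrow> fmodM s (youngM m) u < \<infinity>
      \<Longrightarrow> (LINT x:\<Omega>|lebesgue. G x (u x)) \<le> C + e * enn2real (fmodM s (youngM m) u)"
proof -
  obtain r where r: "0 < r" "\<Omega> \<subseteq> ball 0 r"
    using bounded_subset_ballD[OF \<Omega>(1), of 0] by blast
  obtain z :: 'a where z: "norm z = 10 * r"
    using vector_choose_size[of "10 * r"] r by auto
  define K where "K = (12 * r) powr s"
  define c where "c = measure lebesgue (ball z r) / (12 * r) powr real DIM('a)"
  have K: "0 < K" and c: "0 < c"
    using r by (simp_all add: K_def c_def)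
  obtain C' where C': "\<And>t. \<bar>t\<bar> powr q \<le> C' + e * c / (C2 * K powr q) * youngM m t"
    using powr_le_const_plus_youngM[OF young Q q, of "e * c / (C2 * K powr q)"] e c C2 K by auto
  have "0 \<le> C'"
    using C'[of 0] by simp
  define \<alpha> where "\<alpha> = C2 * K powr q * C'"
  have \<alpha>: "0 \<le> \<alpha>"
    using C2 \<open>0 \<le> C'\<close> by (simp add: \<alpha>_def)
  have \<Omega>_lmeasurable: "\<Omega> \<in> lmeasurable"
    using bounded_set_imp_lmeasurable[OF \<Omega>] .
  show ?thesis
  proof (rule that)
    fix u :: "'a \<Rightarrow> real"
    assume u_meas: "u \<in> borel_measurable lebesgue" and u: "AE x in lebesgue. x \<notin> \<Omega> \<longrightarrow> u x = 0"
      and fin: "fmodM s (youngM m) u < \<infinity>"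
    define f where "f x = c * youngM m (u x / K)" for x
    have f_meas: "f \<in> borel_measurable lebesgue"
      unfolding f_def using u_meas
      by (intro borel_measurable_times borel_measurable_const borel_measurable_youngM[OF young S]
          borel_measurable_divide) auto
    have f_nonneg: "0 \<le> f x" for x
      unfolding f_def using c youngM_nonneg[OF young] by simp
    have "(\<integral>\<^sup>+ x \<in> \<Omega>. ennreal (f x) \<partial>lebesgue) \<le> fmodM s (youngM m) u"
      using modular_le_fmodM[OF young S s r z u] by (simp add: f_def K_def c_def)
    also have "\<dots> = ennreal (enn2real (fmodM s (youngM m) u))"
      using fin by (simp add: less_top[symmetric] ennreal_enn2real)
    finally have f_int: "(\<integral>\<^sup>+ x \<in> \<Omega>. ennreal (f x) \<partial>lebesgue) \<le> ennreal (enn2real (fmodM s (youngM m) u))" .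
    have "G x (u x) \<le> \<alpha> + e * f x" if "x \<in> \<Omega>" for x
    proof -
      have "G x (u x) \<le> C2 * (K powr q * \<bar>u x / K\<bar> powr q)"
        using G[OF that, of "u x"] K by (simp add: abs_div powr_divide)
      also have "\<dots> \<le> C2 * (K powr q * (C' + e * c / (C2 * K powr q) * youngM m (u x / K)))"
        using C'[of "u x / K"] C2 by (intro mult_left_mono) auto
      also have "\<dots> = \<alpha> + e * f x"
        using C2 K by (simp add: \<alpha>_def f_def field_simps)
      finally show ?thesis .
    qed
    then show "(LINT x:\<Omega>|lebesgue. G x (u x)) \<le> \<alpha> * measure lebesgue \<Omega> + e * enn2real (fmodM s (youngM m) u)"
      using \<Omega>_lmeasurable f_meas f_nonneg \<alpha> e f_int by (intro set_integral_le_affine_bound) auto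
  qed
qed

theorem proposition4p2:
  fixes \<Omega> :: "'a::euclidean_space set"
    and m :: "real \<Rightarrow> real" and g :: "'a \<Rightarrow> real \<Rightarrow> real"
    and s p q C0 C1 C2 lam :: real
  assumes dom: "smooth_bounded_domain \<Omega>"
    and s: "0 < s" "s < 1"
    and young: "young_gen m"
    and m0: "1 < Inf ((\<lambda>t. t * m t / youngM m t) ` {0<..})"
    and m0': "bdd_above ((\<lambda>t. t * m t / youngM m t) ` {0<..})"
    and S: "convex_on {0..} (\<lambda>t. youngM m (sqrt t))"
    and p: "1 < p" "p < real DIM('a)"
    and q: "1 < q" "q < real DIM('a) * p / (real DIM('a) - p)"
           "q < Inf ((\<lambda>t. t * m t / youngM m t) ` {0<..})"
    and Q: "((\<lambda>t. \<bar>t\<bar> powr q / youngM m t) \<longlongrightarrow> 0) at_top"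
    and g_meas: "\<And>t. (\<lambda>x. g x t) \<in> borel_measurable (lebesgue_on \<Omega>)"
    and g_cont: "AE x in lebesgue_on \<Omega>. continuous_on UNIV (g x)"
    and C: "C0 > 0" "C1 > 0" "C2 > 0"
    and A: "\<And>x t. x \<in> \<Omega> \<Longrightarrow> \<bar>g x t\<bar> \<le> C0 * \<bar>t\<bar> powr (q - 1)"
    and B: "\<And>x t. x \<in> \<Omega> \<Longrightarrow> C1 * \<bar>t\<bar> powr q \<le> primitive g x t"
           "\<And>x t. x \<in> \<Omega> \<Longrightarrow> primitive g x t \<le> C2 * \<bar>t\<bar> powr q"
    and lam: "lam > 0"
  shows "\<forall>K. \<exists>R. \<forall>u \<in> W0tilde s (youngM m) \<Omega>.
            frac_seminorm s (youngM m) u \<ge> R \<longrightarrow> I_functional s (youngM m) \<Omega> g lam u \<ge> K"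
proof -
  have \<Omega>: "bounded \<Omega>" "\<Omega> \<in> sets lebesgue"
    using dom lmeasurable_open[of \<Omega>] by (auto simp: smooth_bounded_domain_def)
  obtain C where C: "\<And>u. u \<in> borel_measurable lebesgue \<Longrightarrow> (AE x in lebesgue. x \<notin> \<Omega> \<longrightarrow> u x = 0)
      \<Longrightarrow> fmodM s (youngM m) u < \<infinity>
      \<Longrightarrow> (LINT x:\<Omega>|lebesgue. primitive g x (u x))
          \<le> C + 1 / (2 * lam) * enn2real (fmodM s (youngM m) u)"
    using set_integral_le_const_plus_fmodM[where G = "primitive g" and s = s and e = "1 / (2 * lam)",
        OF young S Q _ _ \<Omega> B(2) C(3)] q s lam
    by auto
  have "K \<le> I_functional s (youngM m) \<Omega> g lam u"
    if u: "u \<in> W0tilde s (youngM m) \<Omega>"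
      and R: "max 2 (2 * (K + lam * C)) \<le> frac_seminorm s (youngM m) u" for K u
  proof -
    have u_meas: "u \<in> borel_measurable lebesgue" and u_zero: "AE x in lebesgue. x \<notin> \<Omega> \<longrightarrow> u x = 0"
      and fin: "fmodM s (youngM m) u < \<infinity>"
      using u by (auto simp: W0tilde_def W0space_def Wspace_def orlicz_space_def)
    define \<Phi> where "\<Phi> = enn2real (fmodM s (youngM m) u)"
    have "2 * (K + lam * C) \<le> \<Phi>"
      using R frac_seminorm_le_max_fmodM[OF young S fin] by (simp add: \<Phi>_def max_def split: if_splits)
    moreover have "lam * (LINT x:\<Omega>|lebesgue. primitive g x (u x)) \<le> lam * C + \<Phi> / 2"
      using mult_left_mono[OF C[OF u_meas u_zero fin], of lam] lam by (simp add: \<Phi>_def algebra_simps)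
    ultimately show ?thesis
      by (simp add: I_functional_def \<Phi>_def)
  qed
  then show ?thesis
    by blast
qed

end
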